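(* Let $h(x)$ be a monic irreducible polynomial over $GF(q)$ of degree $m>1$ and order $n$ with $n\ne q^m-1$, and let $J\subseteq A_n$ be the minimal ideal (irreducible cyclic code) with parity-check polynomial $h(x)$. Let $R=(q^m-1)/(q-1)$ and $$d=\gcd(q-1,n),\qquad r=n/d.$$ Then every cycle of $J$ (of a nonzero element) is contained in exactly $r$ proportionality classes, each of which contains exactly $d$ distinct vectors of the cycle; i.e. for every nonzero $z\in J$ one has $d_z=d$ and $r_z=r$. Moreover $1\le r\le R$, $r\mid R$, and $1\le d\le q-1$.
   Context: Let $q>2$ be a prime power. The order $\mathrm{ord}(f)$ of a polynomial $f$ with $f(0)\ne0$ is the least $e\ge1$ with $f\mid x^e-1$; $\gcd(n,q)=1$ holds automatically. $A_n=GF(q)[x]/(x^n-1)$; $J$ is the ideal generated by $(x^n-1)/h(x)$. For nonzero $z\in A_n$: $P_z=\{\alpha z:\alpha\in GF(q)^*\}$ is its proportionality class; $\{z\}=\{x^iz:i\ge0\}$ is its cycle; its period $n_z$ is the least $e\ge1$ with $x^ez=z$ (every nonzero element of $J$ has period $n$); $r_z$ is the least positive integer such that $x^{r_z}z=\alpha z$ for some $\alpha\in GF(q)^*$, and $d_z=n_z/r_z$. *)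

theory Defs
  imports "HOL-Computational_Algebra.Computational_Algebra" "HOL-Library.Cardinality"
begin

definition xn :: "nat \<Rightarrow> 'a::field poly" where
  "xn n = monom 1 n - 1"

definition poly_ord :: "'a::field poly \<Rightarrow> nat" where
  "poly_ord f = (LEAST e. e \<ge> 1 \<and> f dvd xn e)"

text \<open>Elements of A_n = GF(q)[x]/(x^n - 1) are represented by their reduced
  representatives (polynomials of degree < n). The ideal J generated by (x^n-1)/h.\<close>
definition min_ideal :: "nat \<Rightarrow> 'a::field poly \<Rightarrow> 'a poly set" where
  "min_ideal n h = {((xn n div h) * a) mod xn n | a. True}"

definition cycle :: "nat \<Rightarrow> 'a::field poly \<Rightarrow> 'a poly set" where
  "cycle n z = {(monom 1 i * z) mod xn n | i. True}"

definition prop_class :: "'a::field poly \<Rightarrow> 'a poly set" where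
  "prop_class z = {smult \<alpha> z | \<alpha>. \<alpha> \<noteq> 0}"

definition period :: "nat \<Rightarrow> 'a::field poly \<Rightarrow> nat" where
  "period n z = (LEAST e. e \<ge> 1 \<and> (monom 1 e * z) mod xn n = z)"

definition r_of :: "nat \<Rightarrow> 'a::field poly \<Rightarrow> nat" where
  "r_of n z = (LEAST e. e \<ge> 1 \<and> (\<exists>\<alpha>. \<alpha> \<noteq> 0 \<and> (monom 1 e * z) mod xn n = smult \<alpha> z))"

definition d_of :: "nat \<Rightarrow> 'a::field poly \<Rightarrow> nat" where
  "d_of n z = period n z div r_of n z"

end

theory Submission
  imports Defs
begin

(*
  Let h be irreducible over K = GF(q) of degree m > 1 and order n, N = x^n - 1, g = N/h.
  A nonzero z of the minimal ideal J = (g) is z = g a mod N with h not dividing a, so for the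
  shifts y_i = x^i z mod N:  y_j = c y_i  iff  h | x^j - c x^i  iff  h | x^(j-i) - c,
  because h is coprime to x.  For c = 1 this says n | j - i.  For arbitrary nonzero c, the
  finite-field identity  x^(q-1) - 1 = prod_{c <> 0} (x - c)  shows that x^e is congruent to
  a nonzero constant modulo h exactly when r = n / gcd(q - 1, n) divides e.  Hence the cycle
  of z is a sequence of exact period n whose proportionality classes are the residue classes
  modulo r, and counting gives r classes of d = n / r elements each.  The bounds on r and d
  follow from n | q^m - 1, which holds since multiplication by x permutes the q^m - 1 nonzero
  residues modulo h.
*)

section \<open>Polynomials of the form x^k - 1\<close>

lemma xn_add: "xn (a + b) = monom (1::'a::field) a * xn b + xn a"
  by (simp add: xn_def algebra_simps mult_monom)

lemma xn_sub: "b \<le> a \<Longrightarrow> xn a - xn b = monom (1::'a::field) b * xn (a - b)"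
  using xn_add[of b "a - b"] by (simp add: algebra_simps)

lemma xn_dvd_xn_mult: "xn a dvd (xn (a * k) :: 'a::field poly)"
proof (induction k)
  case 0
  then show ?case by (simp add: xn_def)
next
  case (Suc k)
  have "xn (a * Suc k) = monom 1 (a * k) * xn a + (xn (a * k) :: 'a poly)"
    using xn_add[of "a * k" a] by (simp add: add.commute)
  then show ?case using Suc by simp
qed

lemma irreducible_not_dvd_monom:
  fixes h :: "'a::field poly"
  assumes "irreducible h" "degree h > 1"
  shows "\<not> h dvd monom 1 i"
proof
  assume "h dvd monom 1 i"
  then have "h dvd [:0, 1:] ^ i" by (simp add: monom_altdef)
  then have "h dvd [:0, 1:]"
    using field_poly_irreducible_imp_prime[OF assms(1)] prime_elem_dvd_power by blast
  then have "degree h \<le> 1" using dvd_imp_degree_le[of h "[:0, 1:]"] by simp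
  then show False using assms(2) by simp
qed

lemma irreducible_dvd_monom_mult_iff:
  fixes h :: "'a::field poly"
  assumes "irreducible h" "degree h > 1"
  shows "h dvd monom 1 i * p \<longleftrightarrow> h dvd p"
  using field_poly_irreducible_imp_prime[OF assms(1)] irreducible_not_dvd_monom[OF assms]
  by (simp add: prime_elem_dvd_mult_iff)

lemma poly_ord_props:
  fixes h :: "'a::field poly"
  assumes irr: "irreducible h" and dg: "degree h > 1" and ex: "N \<ge> 1" "h dvd xn N"
  shows "poly_ord h \<ge> 1" and "h dvd xn k \<longleftrightarrow> poly_ord h dvd k"
proof -
  let ?P = "\<lambda>e. e \<ge> 1 \<and> h dvd xn e"
  have P: "?P (poly_ord h)" unfolding poly_ord_def by (rule LeastI[of ?P N]) (use ex in auto)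
  then show "poly_ord h \<ge> 1" by simp
  have least: "\<And>e. ?P e \<Longrightarrow> poly_ord h \<le> e" unfolding poly_ord_def by (rule Least_le)
  show "h dvd xn k \<longleftrightarrow> poly_ord h dvd k"
  proof
    assume "poly_ord h dvd k"
    then show "h dvd xn k" using P xn_dvd_xn_mult dvd_trans by blast
  next
    assume "h dvd xn k"
    then show "poly_ord h dvd k"
    proof (induction k rule: less_induct)
      case (less k)
      show ?case
      proof (cases "k = 0")
        case False
        then have le: "poly_ord h \<le> k" using least less.prems by simp
        have "h dvd xn k - xn (poly_ord h)" using less.prems P by (simp add: dvd_diff)
        then have "h dvd xn (k - poly_ord h)"
          by (simp add: xn_sub[OF le] irreducible_dvd_monom_mult_iff[OF irr dg])
        moreover have "k - poly_ord h < k" using P False by simp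
        ultimately have "poly_ord h dvd k - poly_ord h" using less.IH by blast
        then show ?thesis using le by (rule dvd_diffD[OF _ dvd_refl])
      qed simp
    qed
  qed
qed

section \<open>Finite fields\<close>

lemma prime_elem_dvd_prodE:
  fixes p :: "'a::field poly"
  assumes "prime_elem p" "p dvd prod f A"
  obtains a where "a \<in> A" "p dvd f a"
proof (cases "finite A")
  case True
  then show ?thesis using assms prime_elem_dvd_prod_msetE[of p "image_mset f (mset_set A)"] that
    by (auto simp: prod_unfold_prod_mset)
next
  case False
  then show ?thesis using assms by (auto simp: prime_elem_def)
qed

lemma power_card_minus_one:
  fixes c :: "'a::{finite,field}"
  assumes "c \<noteq> 0"
  shows "c ^ (CARD('a) - 1) = 1"
proof -
  let ?A = "UNIV - {0::'a}"
  have inj: "inj_on (\<lambda>x. c * x) ?A" using assms by (auto simp: inj_on_def)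
  have img: "(\<lambda>x. c * x) ` ?A = ?A"
    by (rule endo_inj_surj) (use assms inj in auto)
  have "prod (\<lambda>x. x) ?A = prod (\<lambda>x. x) ((\<lambda>x. c * x) ` ?A)" using img by simp
  also have "\<dots> = prod (\<lambda>x. c * x) ?A" using prod.reindex[OF inj] by simp
  also have "\<dots> = c ^ card ?A * prod (\<lambda>x. x) ?A" by (simp add: prod.distrib)
  finally have "c ^ card ?A = 1" by simp
  moreover have "card ?A = CARD('a) - 1" by (simp add: card_Diff_singleton)
  ultimately show ?thesis by simp
qed

lemma prod_linear_factors_dvd:
  fixes p :: "'a::field poly"
  assumes "finite A" "\<forall>a\<in>A. poly p a = 0" "p \<noteq> 0"
  shows "(\<Prod>a\<in>A. [:-a, 1:]) dvd p"
  using assms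
proof (induction A arbitrary: p rule: finite_induct)
  case (insert x F)
  obtain p' where p': "p = [:-x, 1:] * p'"
    using insert.prems poly_eq_0_iff_dvd by (metis dvdE insertI1)
  have "\<forall>a\<in>F. poly p' a = 0" using insert p' by auto
  moreover have "p' \<noteq> 0" using p' insert.prems(2) by auto
  ultimately have "(\<Prod>a\<in>F. [:-a, 1:]) dvd p'" using insert.IH by blast
  then have "[:-x, 1:] * (\<Prod>a\<in>F. [:-a, 1:]) dvd [:-x, 1:] * p'" by (rule mult_dvd_mono[OF dvd_refl])
  then show ?case using insert.hyps p' by simp
qed simp

lemma prod_nonzero_linear_factors:
  "(\<Prod>c\<in>UNIV - {0::'a::{finite,field}}. [:-c, 1:]) = monom 1 (CARD('a) - 1) - 1"
proof -
  let ?P = "\<Prod>c\<in>UNIV - {0::'a}. [:-c, 1:]"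
  let ?Q = "monom (1::'a) (CARD('a) - 1) - 1"
  have card2: "CARD('a) \<ge> 2"
    using card_mono[of UNIV "{0::'a, 1}"] by simp
  have degQ: "degree ?Q = CARD('a) - 1"
    using card2 degree_add_eq_left[of "-1 :: 'a poly" "monom 1 (CARD('a) - 1)"]
    by (simp add: degree_monom_eq)
  have Qnz: "?Q \<noteq> 0"
  proof
    assume "?Q = 0"
    with degQ card2 show False by simp
  qed
  have lcQ: "lead_coeff ?Q = 1" using card2 degQ by (simp add: coeff_diff)
  have "?P dvd ?Q"
    using power_card_minus_one[where 'a='a] Qnz
    by (intro prod_linear_factors_dvd) (simp_all add: poly_monom)
  then obtain k where k: "?Q = ?P * k" by (elim dvdE)
  have degP: "degree ?P = CARD('a) - 1"
    by (subst degree_prod_eq_sum_degree) (auto simp: card_Diff_singleton)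
  have lcP: "lead_coeff ?P = 1" by (simp add: lead_coeff_prod)
  have "k \<noteq> 0" "?P \<noteq> 0" using k Qnz lcP by auto
  then have "degree k = 0" using k degP degQ card2 degree_mult_eq[of ?P k] by simp
  moreover have "lead_coeff k = 1" using k lcP lcQ by (simp add: lead_coeff_mult)
  ultimately have "k = 1" by (elim degree_eq_zeroE) (simp add: one_pCons)
  then show ?thesis using k by simp
qed

lemma pcompose_monom_one: "pcompose (monom (1::'a::field) k) y = y ^ k"
proof (induction k)
  case (Suc k)
  have "monom (1::'a) (Suc k) = [:0, 1:] * monom 1 k" by (simp add: monom_Suc)
  then show ?case using Suc by (simp add: pcompose_mult pcompose_pCons)
qed (simp add: pcompose_1)

lemma prod_nonzero_shifts:
  fixes y :: "'a::{finite,field} poly"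
  shows "(\<Prod>c\<in>UNIV - {0::'a}. y - [:c:]) = y ^ (CARD('a) - 1) - 1"
proof -
  have "(\<Prod>c\<in>UNIV - {0::'a}. y - [:c:]) = pcompose (\<Prod>c\<in>UNIV - {0::'a}. [:-c, 1:]) y"
    unfolding pcompose_prod by (intro prod.cong refl) (simp add: pcompose_pCons)
  also have "\<dots> = y ^ (CARD('a) - 1) - 1"
    by (simp add: prod_nonzero_linear_factors pcompose_diff pcompose_monom_one pcompose_1)
  finally show ?thesis .
qed

lemma card_polys_degree_less:
  assumes "m \<ge> 1"
  shows "finite {p::'a::{finite,field} poly. degree p < m}"
    and "card {p::'a::{finite,field} poly. degree p < m} = CARD('a) ^ m"
proof -
  let ?L = "{xs::'a list. set xs \<subseteq> UNIV \<and> length xs = m}"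
  have inj: "inj_on Poly ?L"
  proof (rule inj_onI)
    fix xs ys assume xs: "xs \<in> ?L" and ys: "ys \<in> ?L" and e: "Poly xs = Poly ys"
    have "xs ! i = ys ! i" if "i < length xs" for i
      using arg_cong[OF e, of "\<lambda>p. coeff p i"] that xs ys by (simp add: nth_default_def)
    then show "xs = ys" using xs ys by (simp add: list_eq_iff_nth_eq)
  qed
  have img: "Poly ` ?L = {p. degree p < m}"
  proof (intro equalityI subsetI)
    fix p assume "p \<in> Poly ` ?L"
    then obtain xs where xs: "length xs = m" "p = Poly xs" by blast
    have "degree p \<le> m - 1"
      by (rule degree_le) (use xs assms in \<open>auto simp: nth_default_def\<close>)
    then show "p \<in> {p. degree p < m}" using assms by simp
  next
    fix p :: "'a poly" assume p: "p \<in> {p. degree p < m}"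
    have "coeff (Poly (map (coeff p) [0..<m])) i = coeff p i" for i
      using p coeff_eq_0[of p i] by (cases "i < m") (auto simp: nth_default_def)
    then have "Poly (map (coeff p) [0..<m]) = p" by (rule poly_eqI)
    then show "p \<in> Poly ` ?L" by (intro image_eqI[where x = "map (coeff p) [0..<m]"]) auto
  qed
  have "finite ?L" by (rule finite_lists_length_eq) simp
  moreover have "card ?L = CARD('a) ^ m" by (rule card_lists_length_eq) simp
  ultimately show "finite {p::'a poly. degree p < m}"
    and "card {p::'a poly. degree p < m} = CARD('a) ^ m"
    using img card_image[OF inj] finite_imageI[of ?L Poly] by simp_all
qed

text \<open>An irreducible h of degree m > 1 divides x^(q^m - 1) - 1: multiplication by x permutes
  the q^m - 1 nonzero residues modulo h, so x^(q^m-1) fixes their (nonzero) product.\<close>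
lemma irreducible_dvd_xn_card_power:
  fixes h :: "'a::{finite,field} poly"
  assumes irr: "irreducible h" and dg: "degree h > 1"
  shows "h dvd xn (CARD('a) ^ degree h - 1)"
proof -
  let ?S = "{p::'a poly. degree p < degree h} - {0}"
  have pr: "prime_elem h" using irr by (rule field_poly_irreducible_imp_prime)
  have hnz: "h \<noteq> 0" using dg by auto
  have fS: "finite ?S" using card_polys_degree_less(1)[of "degree h"] dg by simp
  have cS: "card ?S = CARD('a) ^ degree h - 1"
    using card_polys_degree_less[of "degree h", where 'a='a] dg by (simp add: card_Diff_singleton)
  have small: "\<not> h dvd p" if "p \<in> ?S" for p
    using that dvd_imp_degree_le[of h p] by auto
  define f where "f p = (monom 1 1 * p) mod h" for p
  have f_into: "f ` ?S \<subseteq> ?S"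
  proof
    fix q assume "q \<in> f ` ?S"
    then obtain p where p: "p \<in> ?S" "q = f p" by blast
    then have "q \<noteq> 0"
      using small irreducible_dvd_monom_mult_iff[OF irr dg] by (auto simp: f_def dvd_eq_mod_eq_0)
    then show "q \<in> ?S" using p degree_mod_less'[OF hnz] by (auto simp: f_def)
  qed
  have f_inj: "inj_on f ?S"
  proof (rule inj_onI)
    fix p p' assume p: "p \<in> ?S" "p' \<in> ?S" and "f p = f p'"
    then have "h dvd monom 1 1 * (p - p')"
      unfolding f_def by (simp add: mod_eq_dvd_iff algebra_simps)
    then have "h dvd p - p'" using irreducible_dvd_monom_mult_iff[OF irr dg] by blast
    moreover have "degree (p - p') < degree h" using p by (intro degree_diff_less) auto
    ultimately show "p = p'" using dvd_imp_degree_le[of h "p - p'"] by fastforce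
  qed
  have "f ` ?S = ?S" by (rule endo_inj_surj[OF fS f_into f_inj])
  then have "prod (\<lambda>p. p) ?S = prod f ?S" using prod.reindex[OF f_inj] by simp
  also have "prod f ?S mod h = prod (\<lambda>p. monom 1 1 * p) ?S mod h"
    unfolding f_def by (rule mod_prod_eq)
  also have "prod (\<lambda>p. monom 1 1 * p) ?S = monom 1 (card ?S) * prod (\<lambda>p. p) ?S"
    by (simp add: prod.distrib monom_power)
  finally have "h dvd prod (\<lambda>p. p) ?S - monom 1 (card ?S) * prod (\<lambda>p. p) ?S"
    by (simp add: mod_eq_dvd_iff)
  then have "h dvd xn (card ?S) * prod (\<lambda>p. p) ?S"
    by (simp add: xn_def algebra_simps dvd_diff_commute)
  moreover have "\<not> h dvd prod (\<lambda>p. p) ?S"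
    using small prime_elem_dvd_prodE[OF pr] by metis
  ultimately have "h dvd xn (card ?S)" using pr prime_elem_dvd_mult_iff by blast
  then show ?thesis using cS by simp
qed

section \<open>Constants congruent to powers of x\<close>

lemma diff_dvd_power_diff: "(x::'a::comm_ring_1) - y dvd x ^ k - y ^ k"
  unfolding power_diff_sumr2 by (rule dvd_triv_left)

text \<open>Raising to the power q - 1 gives n | e (q-1), i.e. r | e;
  conversely x^(r(q-1)) - 1 = \<Prod>_{c \<noteq> 0} (x^r - c) is divisible by h, so the prime h
  divides one factor x^r - c.\<close>
lemma dvd_monom_minus_const_iff:
  fixes h :: "'a::{finite,field} poly"
  assumes irr: "irreducible h" and dg: "degree h > 1"
    and ord: "\<And>k. h dvd xn k \<longleftrightarrow> n dvd k" and n1: "n \<ge> 1"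
  shows "(\<exists>\<alpha>. \<alpha> \<noteq> 0 \<and> h dvd monom 1 e - [:\<alpha>:]) \<longleftrightarrow> n div gcd (CARD('a) - 1) n dvd e"
proof -
  define d where "d = gcd (CARD('a) - 1) n"
  define r where "r = n div d"
  define s where "s = (CARD('a) - 1) div d"
  have dpos: "d > 0" using n1 d_def by simp
  have nr: "n = d * r" unfolding r_def d_def by simp
  have qs: "CARD('a) - 1 = d * s" unfolding s_def d_def by simp
  have "coprime s r" unfolding r_def s_def d_def by (rule div_gcd_coprime) (use n1 in auto)
  then have cop: "coprime r s" by (simp add: coprime_commute)
  have pr: "prime_elem h" using irr by (rule field_poly_irreducible_imp_prime)
  show ?thesis unfolding d_def[symmetric] r_def[symmetric]
  proof
    assume "\<exists>\<alpha>. \<alpha> \<noteq> 0 \<and> h dvd monom 1 e - [:\<alpha>:]"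
    then obtain \<alpha> where "\<alpha> \<noteq> 0" and a: "h dvd monom 1 e - [:\<alpha>:]" by blast
    have "h dvd (monom 1 e) ^ (CARD('a) - 1) - [:\<alpha>:] ^ (CARD('a) - 1)"
      by (rule dvd_trans[OF a diff_dvd_power_diff])
    moreover have "(monom (1::'a) e) ^ (CARD('a) - 1) = monom 1 (e * (CARD('a) - 1))"
      by (simp add: monom_power)
    moreover have "[:\<alpha>:] ^ (CARD('a) - 1) = 1"
      using power_card_minus_one[OF \<open>\<alpha> \<noteq> 0\<close>] by (simp add: poly_const_pow one_pCons)
    ultimately have "h dvd xn (e * (CARD('a) - 1))" by (simp add: xn_def)
    then have "n dvd e * (CARD('a) - 1)" by (simp only: ord)
    then have "d * r dvd d * (e * s)" using nr qs by (simp add: ac_simps)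
    then show "r dvd e" using dpos cop by (simp add: coprime_dvd_mult_left_iff)
  next
    assume "r dvd e"
    then obtain k where ek: "e = r * k" by blast
    have "n dvd r * (CARD('a) - 1)" using nr qs by (simp add: ac_simps)
    then have "h dvd xn (r * (CARD('a) - 1))" by (simp only: ord)
    moreover have "xn (r * (CARD('a) - 1)) = (\<Prod>c\<in>UNIV - {0::'a}. monom 1 r - [:c:])"
      unfolding prod_nonzero_shifts by (simp only: xn_def monom_power power_one)
    ultimately obtain c where c: "c \<in> UNIV - {0}" "h dvd monom 1 r - [:c:]"
      using prime_elem_dvd_prodE[OF pr] by metis
    have "h dvd (monom 1 r) ^ k - [:c:] ^ k" by (rule dvd_trans[OF c(2) diff_dvd_power_diff])
    then have "h dvd monom 1 e - [:c ^ k:]" using ek by (simp add: monom_power poly_const_pow)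
    moreover have "c ^ k \<noteq> 0" using c(1) by simp
    ultimately show "\<exists>\<alpha>. \<alpha> \<noteq> 0 \<and> h dvd monom 1 e - [:\<alpha>:]" by blast
  qed
qed

section \<open>Shifts of code words\<close>

definition shift :: "nat \<Rightarrow> 'a::field poly \<Rightarrow> nat \<Rightarrow> 'a poly" where
  "shift n z i = (monom 1 i * z) mod xn n"

lemma cycle_eq_range_shift: "cycle n z = range (shift n z)"
  by (auto simp: cycle_def shift_def)

lemma shift_0_min_ideal: "z \<in> min_ideal n h \<Longrightarrow> shift n z 0 = z"
  by (auto simp: min_ideal_def shift_def)

text \<open>Since z \<noteq> 0 forces
  g \<noteq> 0 and h \<nmid> a, this is the cancellation of g a from g h | g a (x^j - \<alpha> x^i).\<close>
lemma shift_smult_iff: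
  fixes h :: "'a::field poly"
  assumes pr: "prime_elem h" and hn: "h dvd xn n"
    and z: "z \<in> min_ideal n h" and z0: "z \<noteq> 0"
  shows "shift n z j = smult \<alpha> (shift n z i) \<longleftrightarrow> h dvd monom 1 j - smult \<alpha> (monom 1 i)"
proof -
  define N where "N = (xn n :: 'a poly)"
  define g where "g = N div h"
  obtain a where za: "z = (g * a) mod N" using z unfolding min_ideal_def g_def N_def by blast
  have Ng: "N = h * g" using hn unfolding g_def N_def by simp
  have g0: "g \<noteq> 0" using za z0 by auto
  have ha: "\<not> h dvd a"
  proof
    assume "h dvd a"
    then have "N dvd g * a" using Ng by (simp add: mult.commute mult_dvd_mono)
    then show False using za z0 by (simp add: dvd_eq_mod_eq_0)
  qed
  let ?u = "monom 1 j" and ?v = "monom 1 i"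
  have "shift n z j = smult \<alpha> (shift n z i) \<longleftrightarrow>
      (?u * (g * a)) mod N = (smult \<alpha> (?v * (g * a))) mod N"
    unfolding shift_def N_def[symmetric] za by (simp add: mod_mult_right_eq mod_smult_left)
  also have "\<dots> \<longleftrightarrow> h * g dvd g * (a * (?u - smult \<alpha> ?v))"
    unfolding mod_eq_dvd_iff Ng[symmetric] by (simp add: algebra_simps)
  also have "\<dots> \<longleftrightarrow> h dvd a * (?u - smult \<alpha> ?v)"
    using g0 by (simp add: mult.commute[of h g])
  also have "\<dots> \<longleftrightarrow> h dvd ?u - smult \<alpha> ?v" using pr ha by (simp add: prime_elem_dvd_mult_iff)
  finally show ?thesis .
qed

lemma monom_diff_smult_monom:
  "i \<le> j \<Longrightarrow> monom (1::'a::field) j - smult \<alpha> (monom 1 i) = monom 1 i * (monom 1 (j - i) - [:\<alpha>:])"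
  by (simp add: algebra_simps mult_monom)

lemma sym_rel_dvd_diff_iff_mod:
  fixes P :: "nat \<Rightarrow> nat \<Rightarrow> bool"
  assumes sym: "\<And>i j. P i j \<Longrightarrow> P j i" and le: "\<And>i j. i \<le> j \<Longrightarrow> P i j \<longleftrightarrow> k dvd j - i"
  shows "P i j \<longleftrightarrow> i mod k = j mod k"
proof (cases "i \<le> j")
  case True
  then show ?thesis using le[OF True] mod_eq_dvd_iff_nat[OF True, of k] by metis
next
  case False
  then have "j \<le> i" by simp
  then show ?thesis using le[OF \<open>j \<le> i\<close>] sym mod_eq_dvd_iff_nat[OF \<open>j \<le> i\<close>, of k] by metis
qed

lemma prop_class_eq_iff: "prop_class x = prop_class y \<longleftrightarrow> y \<in> prop_class (x :: 'a::field poly)"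
proof
  assume "prop_class x = prop_class y"
  moreover have "y \<in> prop_class y" unfolding prop_class_def by (auto intro: exI[of _ 1])
  ultimately show "y \<in> prop_class x" by simp
next
  assume "y \<in> prop_class x"
  then obtain \<alpha> where \<alpha>: "\<alpha> \<noteq> 0" "y = smult \<alpha> x" unfolding prop_class_def by blast
  have "smult \<beta> x = smult (\<beta> / \<alpha>) y" "smult \<beta> y = smult (\<beta> * \<alpha>) x" for \<beta>
    using \<alpha> by simp_all
  then show "prop_class x = prop_class y"
    unfolding prop_class_def using \<alpha>(1) by (metis (no_types, opaque_lifting) divide_eq_0_iff mult_eq_0_iff)
qed

lemma prop_class_sym: "y \<in> prop_class x \<Longrightarrow> x \<in> prop_class (y :: 'a::field poly)"
  using prop_class_eq_iff by metis

section \<open>The cycle of a nonzero code word\<close>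

lemma shift_eq_iff_mod:
  fixes h :: "'a::field poly"
  assumes irr: "irreducible h" and dg: "degree h > 1" and ord: "\<And>k. h dvd xn k \<longleftrightarrow> n dvd k"
    and z: "z \<in> min_ideal n h" "z \<noteq> 0"
  shows "shift n z i = shift n z j \<longleftrightarrow> i mod n = j mod n"
proof (rule sym_rel_dvd_diff_iff_mod)
  fix i j :: nat assume ij: "i \<le> j"
  have pr: "prime_elem h" using irr by (rule field_poly_irreducible_imp_prime)
  have hn: "h dvd xn n" using ord by simp
  have "shift n z i = shift n z j \<longleftrightarrow> shift n z j = smult 1 (shift n z i)" by auto
  also have "\<dots> \<longleftrightarrow> h dvd monom 1 i * (monom 1 (j - i) - [:1:])"
    unfolding shift_smult_iff[OF pr hn z] monom_diff_smult_monom[OF ij] ..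
  also have "\<dots> \<longleftrightarrow> h dvd xn (j - i)"
    by (simp add: irreducible_dvd_monom_mult_iff[OF irr dg] xn_def one_pCons)
  finally show "shift n z i = shift n z j \<longleftrightarrow> n dvd j - i" by (simp only: ord)
qed auto

lemma shift_prop_iff_mod:
  fixes h :: "'a::{finite,field} poly"
  assumes irr: "irreducible h" and dg: "degree h > 1" and ord: "\<And>k. h dvd xn k \<longleftrightarrow> n dvd k"
    and n1: "n \<ge> 1" and z: "z \<in> min_ideal n h" "z \<noteq> 0"
  shows "shift n z j \<in> prop_class (shift n z i) \<longleftrightarrow>
    i mod (n div gcd (CARD('a) - 1) n) = j mod (n div gcd (CARD('a) - 1) n)"
proof (rule sym_rel_dvd_diff_iff_mod[where P = "\<lambda>i j. shift n z j \<in> prop_class (shift n z i)"])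
  fix i j :: nat assume ij: "i \<le> j"
  have pr: "prime_elem h" using irr by (rule field_poly_irreducible_imp_prime)
  have hn: "h dvd xn n" using ord by simp
  have "shift n z j \<in> prop_class (shift n z i) \<longleftrightarrow>
      (\<exists>\<alpha>. \<alpha> \<noteq> 0 \<and> shift n z j = smult \<alpha> (shift n z i))"
    unfolding prop_class_def by blast
  also have "\<dots> \<longleftrightarrow> (\<exists>\<alpha>. \<alpha> \<noteq> 0 \<and> h dvd monom 1 i * (monom 1 (j - i) - [:\<alpha>:]))"
    unfolding shift_smult_iff[OF pr hn z] monom_diff_smult_monom[OF ij] ..
  also have "\<dots> \<longleftrightarrow> (\<exists>\<alpha>. \<alpha> \<noteq> 0 \<and> h dvd monom 1 (j - i) - [:\<alpha>:])"
    by (simp add: irreducible_dvd_monom_mult_iff[OF irr dg])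
  also have "\<dots> \<longleftrightarrow> n div gcd (CARD('a) - 1) n dvd j - i"
    by (rule dvd_monom_minus_const_iff[OF irr dg ord n1])
  finally show "shift n z j \<in> prop_class (shift n z i) \<longleftrightarrow> n div gcd (CARD('a) - 1) n dvd j - i" .
qed (rule prop_class_sym)

section \<open>Counting and arithmetic\<close>

lemma card_residue_class:
  fixes r d c :: nat
  assumes "c < r"
  shows "card {j. j < r * d \<and> j mod r = c} = d"
proof -
  have "{j. j < r * d \<and> j mod r = c} = (\<lambda>k. c + k * r) ` {..<d}"
  proof (intro equalityI subsetI)
    fix j assume j: "j \<in> {j. j < r * d \<and> j mod r = c}"
    then have "j = c + (j div r) * r" using div_mult_mod_eq[of j r] by simp
    moreover have "j div r < d" using j by (simp add: less_mult_imp_div_less mult.commute)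
    ultimately show "j \<in> (\<lambda>k. c + k * r) ` {..<d}" by blast
  next
    fix j assume "j \<in> (\<lambda>k. c + k * r) ` {..<d}"
    then obtain k where k: "k < d" "j = c + k * r" by auto
    have "c + k * r < r * Suc k" using assms by simp
    also have "\<dots> \<le> r * d" using k by (intro mult_le_mono2) simp
    finally show "j \<in> {j. j < r * d \<and> j mod r = c}" using k assms by simp
  qed
  moreover have "inj_on (\<lambda>k. c + k * r) {..<d}" using assms by (auto simp: inj_on_def)
  ultimately show ?thesis by (simp add: card_image)
qed

lemma periodic_sequence_class_counts:
  fixes y :: "nat \<Rightarrow> 'a::field poly"
  assumes r: "r > 0" and d: "d > 0" and n: "n = r * d"
    and same: "\<And>i j. y i = y j \<longleftrightarrow> i mod n = j mod n"
    and prop_iff: "\<And>i j. y j \<in> prop_class (y i) \<longleftrightarrow> i mod r = j mod r"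
  shows "card {prop_class x | x. x \<in> range y} = r"
    and "\<And>x. x \<in> range y \<Longrightarrow> card (prop_class x \<inter> range y) = d"
proof -
  have n0: "n > 0" using r d n by simp
  have cls_eq: "prop_class (y i) = prop_class (y j) \<longleftrightarrow> i mod r = j mod r" for i j
    using prop_class_eq_iff prop_iff by metis
  have range_y: "range y = y ` {..<n}"
  proof (intro equalityI subsetI)
    fix x assume "x \<in> range y"
    then obtain i where "x = y i" by blast
    then have "x = y (i mod n)" using same by simp
    then show "x \<in> y ` {..<n}" using n0 by simp
  qed auto
  have inj: "inj_on y {..<n}" using same by (auto simp: inj_on_def)
  have "{prop_class x | x. x \<in> range y} = (\<lambda>i. prop_class (y i)) ` {..<r}"
  proof (intro equalityI subsetI)
    fix c assume "c \<in> {prop_class x | x. x \<in> range y}"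
    then obtain i where "c = prop_class (y i)" by blast
    then have "c = prop_class (y (i mod r))" using cls_eq by simp
    then show "c \<in> (\<lambda>i. prop_class (y i)) ` {..<r}" using r by auto
  qed auto
  moreover have "inj_on (\<lambda>i. prop_class (y i)) {..<r}" using cls_eq by (auto simp: inj_on_def)
  ultimately show "card {prop_class x | x. x \<in> range y} = r" by (simp add: card_image)
  fix x assume "x \<in> range y"
  then obtain i where x: "x = y i" by blast
  let ?C = "{j. j < r * d \<and> j mod r = i mod r}"
  have "prop_class (y i) \<inter> range y = y ` ?C"
    unfolding range_y using prop_iff n by auto
  moreover have "inj_on y ?C" using n by (intro inj_on_subset[OF inj]) auto
  ultimately have "card (prop_class (y i) \<inter> range y) = card ?C" by (simp add: card_image)
  also have "\<dots> = d" using r by (intro card_residue_class) simp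
  finally show "card (prop_class x \<inter> range y) = d" using x by simp
qed

lemma least_positive_multiple: "k \<ge> 1 \<Longrightarrow> (LEAST e. e \<ge> 1 \<and> k dvd e) = (k::nat)"
  by (rule Least_equality) (auto dest: dvd_imp_le)

text \<open>Numerical consequences of n | Q^m - 1: with R = (Q^m - 1)/(Q - 1), d = gcd(Q - 1, n) and
  r = n / d, r is coprime to (Q - 1)/d and n | (Q - 1) R, so r | R.\<close>
lemma order_quotient_bounds:
  fixes Q m n :: nat
  assumes Q: "Q \<ge> 2" and m: "m \<ge> 1" and n1: "n \<ge> 1" and ndvd: "n dvd Q ^ m - 1"
  shows "n div gcd (Q - 1) n dvd (Q ^ m - 1) div (Q - 1)"
    and "1 \<le> n div gcd (Q - 1) n" and "n div gcd (Q - 1) n \<le> (Q ^ m - 1) div (Q - 1)"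
    and "1 \<le> gcd (Q - 1) n" and "gcd (Q - 1) n \<le> Q - 1"
proof -
  define d where "d = gcd (Q - 1) n"
  define r where "r = n div d"
  define s where "s = (Q - 1) div d"
  define R where "R = (Q ^ m - 1) div (Q - 1)"
  have dpos: "d > 0" using n1 d_def by simp
  have nr: "n = d * r" unfolding r_def d_def by simp
  have qs: "Q - 1 = d * s" unfolding s_def d_def by simp
  have "coprime s r" unfolding r_def s_def d_def by (rule div_gcd_coprime) (use n1 in auto)
  then have cop: "coprime r s" by (simp add: coprime_commute)
  have "int Q - 1 dvd int Q ^ m - 1 ^ m" by (rule diff_dvd_power_diff)
  then have "int (Q - 1) dvd int (Q ^ m - 1)" using Q by (simp add: of_nat_diff)
  then have "Q - 1 dvd Q ^ m - 1" by (simp only: int_dvd_int_iff)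
  then have QR: "Q ^ m - 1 = (Q - 1) * R" unfolding R_def by simp
  have "Q ^ m \<ge> Q ^ 1" using Q m by (intro power_increasing) auto
  then have "Q ^ m > 1" using Q by simp
  then have Rpos: "R > 0" using QR by (cases R) auto
  have "d * r dvd d * (s * R)" using ndvd nr qs QR by (simp add: ac_simps)
  then have "r dvd R" using dpos cop by (simp add: coprime_dvd_mult_right_iff)
  then show "n div gcd (Q - 1) n dvd (Q ^ m - 1) div (Q - 1)"
    and "n div gcd (Q - 1) n \<le> (Q ^ m - 1) div (Q - 1)"
    using dvd_imp_le[OF _ Rpos] unfolding r_def d_def R_def by auto
  have "r \<ge> 1" using nr n1 by (cases r) auto
  then show "1 \<le> n div gcd (Q - 1) n" unfolding r_def d_def .
  show "1 \<le> gcd (Q - 1) n" using dpos unfolding d_def by linarith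
  show "gcd (Q - 1) n \<le> Q - 1" using Q by (intro gcd_le1_nat) simp
qed

lemma min_ideal_cycle_structure:
  fixes h :: "'a::{finite,field} poly"
  assumes irr: "irreducible h" and dg: "degree h > 1" and ord: "\<And>k. h dvd xn k \<longleftrightarrow> n dvd k"
    and n1: "n \<ge> 1" and z: "z \<in> min_ideal n h" "z \<noteq> 0"
  defines "d \<equiv> gcd (CARD('a) - 1) n" and "r \<equiv> n div gcd (CARD('a) - 1) n"
  shows "card {prop_class y | y. y \<in> cycle n z} = r
    \<and> (\<forall>y \<in> cycle n z. card (prop_class y \<inter> cycle n z) = d)
    \<and> d_of n z = d \<and> r_of n z = r"
proof -
  have d: "d > 0" using n1 by (simp add: d_def)
  have n: "n = r * d" by (simp add: r_def d_def)
  then have r: "r > 0" using n1 by (cases r) auto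
  note same = shift_eq_iff_mod[OF irr dg ord z]
  note prop_iff = shift_prop_iff_mod[OF irr dg ord n1 z, folded r_def]
  note counts = periodic_sequence_class_counts[OF r d n same prop_iff, folded cycle_eq_range_shift]
  have z0: "shift n z 0 = z" using z(1) by (rule shift_0_min_ideal)
  have "shift n z e = z \<longleftrightarrow> n dvd e" for e
    using same[of e 0] unfolding z0 by (simp add: dvd_eq_mod_eq_0)
  then have "period n z = (LEAST e. e \<ge> 1 \<and> n dvd e)"
    unfolding period_def shift_def[symmetric] by (simp only:)
  then have period: "period n z = n" using least_positive_multiple[OF n1] by (simp only:)
  have "(\<exists>\<alpha>. \<alpha> \<noteq> 0 \<and> shift n z e = smult \<alpha> z) \<longleftrightarrow> r dvd e" for e
    using prop_iff[where i = 0 and j = e] unfolding z0 prop_class_def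
    by (auto simp: dvd_eq_mod_eq_0)
  then have "r_of n z = (LEAST e. e \<ge> 1 \<and> r dvd e)"
    unfolding r_of_def shift_def[symmetric] by (simp only:)
  moreover have "r \<ge> 1" using r by simp
  ultimately have r_of: "r_of n z = r" using least_positive_multiple by (simp only:)
  have d_of: "d_of n z = d" unfolding d_of_def period r_of using n r by simp
  show ?thesis using counts(1) counts(2) d_of r_of by (intro conjI ballI)
qed

theorem theorem2:
  fixes h :: "'a::{finite,field} poly" and m n :: nat
  assumes q_gt2: "CARD('a) > 2"
    and monic: "lead_coeff h = 1"
    and irr: "irreducible h"
    and deg: "degree h = m" and m_gt1: "m > 1"
    and ord: "poly_ord h = n"
    and n_ne: "n \<noteq> CARD('a) ^ m - 1"
  defines "J \<equiv> min_ideal n h"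
    and "R \<equiv> (CARD('a) ^ m - 1) div (CARD('a) - 1)"
    and "d \<equiv> gcd (CARD('a) - 1) n"
    and "r \<equiv> n div gcd (CARD('a) - 1) n"
  shows "(\<forall>z \<in> J. z \<noteq> 0 \<longrightarrow>
            card {prop_class y | y. y \<in> cycle n z} = r
          \<and> (\<forall>y \<in> cycle n z. card (prop_class y \<inter> cycle n z) = d)
          \<and> d_of n z = d \<and> r_of n z = r)
       \<and> 1 \<le> r \<and> r \<le> R \<and> r dvd R \<and> 1 \<le> d \<and> d \<le> CARD('a) - 1"
proof -
  have dg: "degree h > 1" using deg m_gt1 by simp
  have hq: "h dvd xn (CARD('a) ^ m - 1)" using irreducible_dvd_xn_card_power[OF irr dg] deg by simp
  have "CARD('a) ^ m - 1 \<ge> 1"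
    using q_gt2 m_gt1 one_less_power[of "CARD('a)" m] by linarith
  note ord_props = poly_ord_props[OF irr dg this hq, unfolded ord]
  have ndvd: "n dvd CARD('a) ^ m - 1" using ord_props(2) hq by simp
  have cycles: "card {prop_class y | y. y \<in> cycle n z} = r
          \<and> (\<forall>y \<in> cycle n z. card (prop_class y \<inter> cycle n z) = d)
          \<and> d_of n z = d \<and> r_of n z = r" if "z \<in> J" "z \<noteq> 0" for z
    using that unfolding J_def d_def r_def
    by (rule min_ideal_cycle_structure[OF irr dg ord_props(2) ord_props(1)])
  have "CARD('a) \<ge> 2" "m \<ge> 1" using q_gt2 m_gt1 by simp_all
  note bounds = order_quotient_bounds[OF this ord_props(1) ndvd, folded R_def d_def r_def]
  show ?thesis using cycles bounds by blast
qed

end
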